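(* Let $i\geq1$ and let $\tau$ be an SSRCT of shape $\alpha$ such that $\widetilde\alpha$ has an addable node in column $i$. Then $\mu_i(\tau)$ is an SSRCT of shape $\gamma/\!\!/(1)$, where $\gamma=u_i(\alpha)$.
   Context: Compositions (positive parts) are drawn as reverse composition diagrams: row $r$ from the top has $\alpha_r$ left-justified boxes; $\widetilde\alpha$ is the sorted partition. For the skew shape $\gamma/\!\!/(1)$ the single inner box is the first box of the last row. An SSRCT of shape $\gamma/\!\!/\beta$ (inner shape $\beta$ occupying, left-justified, the last $l(\beta)$ rows) is a filling of the non-inner boxes with positive integers such that rows weakly decrease left to right, the filled first-column entries strictly increase top to bottom, and for rows $r<s$ and column $c$ with $(s,c+1)$ a filled box: if $(r,c)$ is inner or $\tau(r,c)\geq\tau(s,c+1)$, then $(r,c+1)$ is inner or a filled box with $\tau(r,c+1)>\tau(s,c+1)$. Operators: $\mathfrak{d}_j(\alpha)$ subtracts $1$ from the rightmost part equal to $j$ (omitting a resulting $0$); $\mathfrak{v}_{[i-1]}=\mathfrak{d}_1\cdots\mathfrak{d}_{i-1}$ ($\mathfrak{d}_{i-1}$ first; $\mathfrak{v}_{[0]}=\mathrm{id}$); $a_i$ appends a part $i$; $u_i=a_i\mathfrak{v}_{[i-1]}$. $\phi_{j+1}$ ($j\geq1$), for an SSRCT $\tau$ of straight shape with a part equal to $j$ ($\tau=0$ outside the shape): $r_1$ is the largest row index of a part equal to $j$; for $t\geq2$, $r_t$ is the largest $r<r_{t-1}$ with $\tau(r,j)>\tau(r_{t-1},j)\geq\tau(r,j+1)$,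 ending at $r_k$; $\phi_{j+1}(\tau)$ places, for $t=k,\ldots,2$, the original $\tau(r_{t-1},j)$ into box $(r_t,j)$ and deletes box $(r_1,j)$ (and its row if empty); $\tau(r_k,j)$ exits. $\mu_i(\tau)$: if $i=1$ let $\tau'=\tau$, $H=\varnothing$; if $i\geq2$ let $\tau'=\phi_2(\cdots\phi_i(\tau)\cdots)$ and $H$ the multiset of the $i-1$ exiting entries. If $\tau'$ has shape $(\gamma_1,\ldots,\gamma_s)$, $\mu_i(\tau)$ is the filling of $(\gamma_1,\ldots,\gamma_s,i)/\!\!/(1)$ whose first $s$ rows are $\tau'$ and whose last row has an empty first box followed by the elements of $H$ in decreasing order. *)

theory Defs
  imports Main
begin

(* A filling (tableau) is a list of rows
   (nat list list); row r (1-indexed, from the top) is  T ! (r-1), and its c-th box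
   (1-indexed, from the left) holds  T ! (r-1) ! (c-1).  Boxes outside the diagram have
   value 0 (function ent).  In a skew filling, the values stored in inner boxes are
   irrelevant (we store 0). *)

definition is_comp :: "nat list \<Rightarrow> bool" where
  "is_comp \<alpha> \<longleftrightarrow> (\<forall>x\<in>set \<alpha>. 0 < x)"

definition ent :: "nat list list \<Rightarrow> nat \<Rightarrow> nat \<Rightarrow> nat" where
  "ent T r c = (if 1 \<le> r \<and> r \<le> length T \<and> 1 \<le> c \<and> c \<le> length (T ! (r - 1))
                then T ! (r - 1) ! (c - 1) else 0)"

definition in_shape :: "nat list \<Rightarrow> nat \<Rightarrow> nat \<Rightarrow> bool" where
  "in_shape \<gamma> r c \<longleftrightarrow> 1 \<le> r \<and> r \<le> length \<gamma> \<and> 1 \<le> c \<and> c \<le> \<gamma> ! (r - 1)"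

(* inner shape \<beta> occupies, left-justified, the last length \<beta> rows of \<gamma> *)
definition inner :: "nat list \<Rightarrow> nat list \<Rightarrow> nat \<Rightarrow> nat \<Rightarrow> bool" where
  "inner \<gamma> \<beta> r c \<longleftrightarrow> length \<gamma> - length \<beta> < r \<and> r \<le> length \<gamma> \<and> 1 \<le> c
      \<and> c \<le> \<beta> ! (r - (length \<gamma> - length \<beta>) - 1)"

definition filled :: "nat list \<Rightarrow> nat list \<Rightarrow> nat \<Rightarrow> nat \<Rightarrow> bool" where
  "filled \<gamma> \<beta> r c \<longleftrightarrow> in_shape \<gamma> r c \<and> \<not> inner \<gamma> \<beta> r c"

(* SSRCT of shape \<gamma>//\<beta>; straight shape \<alpha> is \<alpha>//[] *)
definition ssrct :: "nat list \<Rightarrow> nat list \<Rightarrow> nat list list \<Rightarrow> bool" where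
  "ssrct \<gamma> \<beta> T \<longleftrightarrow>
     is_comp \<gamma> \<and> is_comp \<beta> \<and> length \<beta> \<le> length \<gamma>
   \<and> (\<forall>k < length \<beta>. \<beta> ! k \<le> \<gamma> ! (length \<gamma> - length \<beta> + k))
   \<and> map length T = \<gamma>
   \<and> (\<forall>r c. filled \<gamma> \<beta> r c \<longrightarrow> 0 < ent T r c)
   \<and> (\<forall>r c. filled \<gamma> \<beta> r c \<and> filled \<gamma> \<beta> r (c + 1) \<longrightarrow> ent T r (c + 1) \<le> ent T r c)
   \<and> (\<forall>r s. r < s \<and> filled \<gamma> \<beta> r 1 \<and> filled \<gamma> \<beta> s 1 \<longrightarrow> ent T r 1 < ent T s 1)
   \<and> (\<forall>r s c. r < s \<and> 1 \<le> c \<and> filled \<gamma> \<beta> s (c + 1)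
        \<and> (inner \<gamma> \<beta> r c \<or> (filled \<gamma> \<beta> r c \<and> ent T s (c + 1) \<le> ent T r c))
        \<longrightarrow> (inner \<gamma> \<beta> r (c + 1)
             \<or> (filled \<gamma> \<beta> r (c + 1) \<and> ent T s (c + 1) < ent T r (c + 1))))"

definition dop :: "nat \<Rightarrow> nat list \<Rightarrow> nat list" where
  "dop j \<alpha> = (if j \<in> set \<alpha> then
      (let k = (GREATEST k. k < length \<alpha> \<and> \<alpha> ! k = j) in
        if j = 1 then take k \<alpha> @ drop (Suc k) \<alpha> else \<alpha>[k := j - 1])
     else \<alpha>)"

(* vop m = d_1 ... d_m  (d_m applied first) *)
fun vop :: "nat \<Rightarrow> nat list \<Rightarrow> nat list" where
  "vop 0 \<alpha> = \<alpha>"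
| "vop (Suc m) \<alpha> = vop m (dop (Suc m) \<alpha>)"

definition aop :: "nat \<Rightarrow> nat list \<Rightarrow> nat list" where
  "aop i \<alpha> = \<alpha> @ [i]"

definition uop :: "nat \<Rightarrow> nat list \<Rightarrow> nat list" where
  "uop i \<alpha> = aop i (vop (i - 1) \<alpha>)"

definition sorted_partition :: "nat list \<Rightarrow> nat list" where
  "sorted_partition \<alpha> = rev (sort \<alpha>)"

definition partval :: "nat list \<Rightarrow> nat \<Rightarrow> nat" where
  "partval lam k = (if 1 \<le> k \<and> k \<le> length lam then lam ! (k - 1) else 0)"

definition addable_in_col :: "nat list \<Rightarrow> nat \<Rightarrow> bool" where
  "addable_in_col lam i \<longleftrightarrow> (\<exists>k \<ge> 1. partval lam k = i - 1 \<and> (k = 1 \<or> i \<le> partval lam (k - 1)))"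

definition phi_next :: "nat list list \<Rightarrow> nat \<Rightarrow> nat \<Rightarrow> nat option" where
  "phi_next T j r = (let S = {r'. 1 \<le> r' \<and> r' < r \<and> ent T r j < ent T r' j
                                 \<and> ent T r' (j + 1) \<le> ent T r j}
                     in if S = {} then None else Some (Max S))"

fun phi_chain :: "nat \<Rightarrow> nat list list \<Rightarrow> nat \<Rightarrow> nat \<Rightarrow> nat list" where
  "phi_chain 0 T j r = [r]"
| "phi_chain (Suc n) T j r =
     r # (case phi_next T j r of None \<Rightarrow> [] | Some r' \<Rightarrow> phi_chain n T j r')"

(* phi j T = (phi_{j+1}(T), exiting entry); uses a part equal to j *)
definition phi :: "nat \<Rightarrow> nat list list \<Rightarrow> nat list list \<times> nat" where
  "phi j T = (let r1 = Max {r. 1 \<le> r \<and> r \<le> length T \<and> length (T ! (r - 1)) = j};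
                  rs = phi_chain r1 T j r1;
                  T1 = fold (\<lambda>(a, b) U. U[a - 1 := (U ! (a - 1))[j - 1 := ent T b j]])
                            (zip (tl rs) rs) T;
                  row' = butlast (T1 ! (r1 - 1));
                  T2 = (if row' = [] then take (r1 - 1) T1 @ drop r1 T1
                        else T1[r1 - 1 := row'])
              in (T2, ent T (last rs) j))"

(* apply phi_{m+1}, then phi_m, ..., phi_2; collect exiting entries *)
fun mu_aux :: "nat \<Rightarrow> nat list list \<Rightarrow> nat list list \<times> nat list" where
  "mu_aux 0 T = (T, [])"
| "mu_aux (Suc m) T = (let (T1, x) = phi (Suc m) T; (T2, H) = mu_aux m T1 in (T2, x # H))"

(* mu_i(T): filling of shape (gamma_1..gamma_s, i)//(1); inner box stores 0 *)
definition mu :: "nat \<Rightarrow> nat list list \<Rightarrow> nat list list" where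
  "mu i T = (let (T', H) = mu_aux (i - 1) T in T' @ [0 # rev (sort H)])"

end

theory Submission
  imports Defs
begin

text \<open>Each \<open>\<phi>\<^sub>j\<^sub>+\<^sub>1\<close> deletes the last box of the lowest row of length \<open>j\<close> and moves the column-\<open>j\<close>
  entries along the bumping chain \<open>r\<^sub>1 > r\<^sub>2 > \<dots> > r\<^sub>k\<close> one step up, ejecting \<open>\<tau>(r\<^sub>k, j)\<close>.
  Choosing each \<open>r\<^sub>t\<close> as low as possible is exactly what keeps the triple rule intact, so the
  result is again an SSRCT, of shape \<open>d\<^sub>j(\<alpha>)\<close>; and the ejected entry is below the column-\<open>(j+1)\<close>
  neighbour of every column-\<open>j\<close> entry it does not exceed, i.e. it may sit in column \<open>j+1\<close> of a new
  bottom row. The entries ejected by \<open>\<phi>\<^sub>i, \<dots>, \<phi>\<^sub>2\<close> weakly increase, so the bottom row of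
  \<open>\<mu>\<^sub>i(\<tau>)\<close> decreases and satisfies the triple rule against all rows above. The addable node only
  guarantees a part \<open>i - 1\<close> for \<open>\<phi>\<^sub>i\<close>; each later \<open>\<phi>\<^sub>j\<close> finds the part \<open>j - 1\<close> that
  \<open>\<phi>\<^sub>j\<^sub>+\<^sub>1\<close> has just created.\<close>

section \<open>Straight tableaux\<close>

definition box :: "nat list list \<Rightarrow> nat \<Rightarrow> nat \<Rightarrow> bool" where
  "box T r c \<longleftrightarrow> 1 \<le> r \<and> r \<le> length T \<and> 1 \<le> c \<and> c \<le> length (T ! (r - 1))"

text \<open>The SSRCT axioms of a straight filling, with the boxes recognised as the places of nonzero
  entries; since \<open>ent\<close> is \<open>0\<close> outside the diagram, the boundary cases of the axioms hold vacuously.\<close>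

definition tableau :: "nat list list \<Rightarrow> bool" where
  "tableau T \<longleftrightarrow> (\<forall>row\<in>set T. row \<noteq> [] \<and> (\<forall>x\<in>set row. 0 < x)) \<and>
     (\<forall>r c. 1 \<le> c \<longrightarrow> ent T r (Suc c) \<le> ent T r c) \<and>
     (\<forall>r s. 1 \<le> r \<and> r < s \<and> 0 < ent T s 1 \<longrightarrow> ent T r 1 < ent T s 1) \<and>
     (\<forall>r s c. r < s \<and> 1 \<le> c \<and> 0 < ent T s (Suc c) \<and> ent T s (Suc c) \<le> ent T r c
        \<longrightarrow> ent T s (Suc c) < ent T r (Suc c))"

lemma ent_eq_box: "ent T r c = (if box T r c then T ! (r - 1) ! (c - 1) else 0)"
  by (simp add: ent_def box_def)

lemma box_if_ent_nonzero: "ent T r c \<noteq> 0 \<Longrightarrow> box T r c"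
  by (auto simp: ent_eq_box split: if_splits)

lemma tableauI:
  assumes first_box: "\<And>r. 1 \<le> r \<Longrightarrow> r \<le> length T \<Longrightarrow> box T r 1"
    and pos: "\<And>r c. box T r c \<Longrightarrow> 0 < ent T r c"
    and row: "\<And>r c. 1 \<le> c \<Longrightarrow> ent T r (Suc c) \<le> ent T r c"
    and first_col: "\<And>r s. 1 \<le> r \<Longrightarrow> r < s \<Longrightarrow> 0 < ent T s 1 \<Longrightarrow> ent T r 1 < ent T s 1"
    and triple: "\<And>r s c. r < s \<Longrightarrow> 1 \<le> c \<Longrightarrow> 0 < ent T s (Suc c) \<Longrightarrow> ent T s (Suc c) \<le> ent T r c
       \<Longrightarrow> ent T s (Suc c) < ent T r (Suc c)"
  shows "tableau T"
proof -
  have "row \<noteq> [] \<and> (\<forall>x\<in>set row. 0 < x)" if "row \<in> set T" for row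
  proof -
    obtain k where k: "k < length T" "row = T ! k" using \<open>row \<in> set T\<close> by (auto simp: in_set_conv_nth)
    have "box T (Suc k) 1" using first_box[of "Suc k"] k by simp
    moreover have "0 < x" if "x \<in> set row" for x
    proof -
      obtain m where m: "m < length row" "x = row ! m" using \<open>x \<in> set row\<close> by (auto simp: in_set_conv_nth)
      have "box T (Suc k) (Suc m)" using k m by (simp add: box_def)
      from pos[OF this] show "0 < x" using k m by (simp add: ent_eq_box box_def)
    qed
    ultimately show ?thesis using k by (auto simp: box_def)
  qed
  then show ?thesis unfolding tableau_def using row first_col triple by blast
qed

context
  fixes T :: "nat list list"
  assumes T: "tableau T"
begin

lemma tableau_ent_pos_iff: "0 < ent T r c \<longleftrightarrow> box T r c"
proof
  assume b: "box T r c"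
  then have "T ! (r - 1) \<in> set T" "T ! (r - 1) ! (c - 1) \<in> set (T ! (r - 1))"
    by (auto simp: box_def)
  then show "0 < ent T r c" using T b by (auto simp: tableau_def ent_eq_box)
qed (auto intro: box_if_ent_nonzero)

lemma tableau_row_decreasing: "1 \<le> c \<Longrightarrow> ent T r (Suc c) \<le> ent T r c"
  using T by (simp add: tableau_def)

lemma tableau_row_antimono:
  assumes "1 \<le> c" "c \<le> d" shows "ent T r d \<le> ent T r c"
  using assms(2)
proof (induction d rule: dec_induct)
  case (step n) then show ?case using tableau_row_decreasing[of n r] assms(1) by simp
qed simp

lemma tableau_first_col_increasing:
  "1 \<le> r \<Longrightarrow> r < s \<Longrightarrow> 0 < ent T s 1 \<Longrightarrow> ent T r 1 < ent T s 1"
  using T by (simp add: tableau_def)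

lemma tableau_triple:
  "r < s \<Longrightarrow> 1 \<le> c \<Longrightarrow> 0 < ent T s (Suc c) \<Longrightarrow> ent T s (Suc c) \<le> ent T r c
   \<Longrightarrow> ent T s (Suc c) < ent T r (Suc c)"
  using T unfolding tableau_def by blast

lemma tableau_col_distinct:
  assumes "r < s" "0 < ent T r c" "0 < ent T s c"
  shows "ent T r c \<noteq> ent T s c"
proof
  assume eq: "ent T r c = ent T s c"
  have "1 \<le> r" "1 \<le> c" using assms(2) tableau_ent_pos_iff by (auto simp: box_def)
  show False
  proof (cases "c = 1")
    case True
    then show False using tableau_first_col_increasing[OF \<open>1 \<le> r\<close> assms(1)] assms(3) eq by simp
  next
    case False
    then obtain c' where c': "c = Suc c'" "1 \<le> c'" using \<open>1 \<le> c\<close> by (cases c) auto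
    have "ent T r c \<le> ent T r c'" using tableau_row_decreasing[OF c'(2)] c' by simp
    then have "ent T s c < ent T r c" using tableau_triple[OF assms(1) c'(2)] assms(3) eq c' by simp
    with eq show False by simp
  qed
qed

end

lemma not_inner_Nil: "\<not> inner \<gamma> [] r c"
  by (simp add: inner_def)

lemma ssrct_Nil_imp_tableau:
  assumes "ssrct \<alpha> [] T" shows "map length T = \<alpha>" "tableau T"
proof -
  have lengths: "map length T = \<alpha>" and comp: "is_comp \<alpha>" using assms by (simp_all add: ssrct_def)
  have filled: "filled \<alpha> [] r c \<longleftrightarrow> box T r c" for r c
    using lengths by (auto simp: filled_def not_inner_Nil in_shape_def box_def)
  have pos: "box T r c \<Longrightarrow> 0 < ent T r c" for r c using assms filled by (simp add: ssrct_def)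
  then have pos_iff: "0 < ent T r c \<longleftrightarrow> box T r c" for r c
    using box_if_ent_nonzero by (metis neq0_conv)
  have first_box: "box T r 1" if "1 \<le> r" "r \<le> length T" for r
  proof -
    have "\<alpha> ! (r - 1) \<in> set \<alpha>" "\<alpha> ! (r - 1) = length (T ! (r - 1))"
      using that lengths by auto
    then show ?thesis using that comp by (auto simp: is_comp_def box_def Suc_le_eq)
  qed
  show "map length T = \<alpha>" by (fact lengths)
  show "tableau T"
  proof (rule tableauI)
    show "ent T r (Suc c) \<le> ent T r c" if "1 \<le> c" for r c
    proof (cases "box T r (Suc c)")
      case True
      then have "box T r c" using that by (simp add: box_def)
      with True show ?thesis using assms filled unfolding ssrct_def by simp
    qed (simp add: ent_eq_box)
    show "ent T r 1 < ent T s 1" if "1 \<le> r" "r < s" "0 < ent T s 1" for r s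
    proof -
      have "box T s 1" using that pos_iff by simp
      moreover have "box T r 1" using first_box that calculation by (auto simp: box_def)
      ultimately show ?thesis using that assms filled unfolding ssrct_def by simp
    qed
    show "ent T s (Suc c) < ent T r (Suc c)"
      if "r < s" "1 \<le> c" "0 < ent T s (Suc c)" "ent T s (Suc c) \<le> ent T r c" for r s c
    proof -
      have "filled \<alpha> [] s (c + 1)" "filled \<alpha> [] r c"
        using that pos_iff filled by (simp_all, metis le_trans not_le less_le_trans pos_iff le_refl)
      with that assms have "filled \<alpha> [] r (c + 1) \<and> ent T s (c + 1) < ent T r (c + 1)"
        unfolding ssrct_def by (auto simp: not_inner_Nil)
      then show ?thesis by simp
    qed
  qed (use first_box pos in auto)
qed


section \<open>Bumping chains\<close>

definition bump_candidates :: "nat list list \<Rightarrow> nat \<Rightarrow> nat \<Rightarrow> nat set" where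
  "bump_candidates T j r =
     {r'. 1 \<le> r' \<and> r' < r \<and> ent T r j < ent T r' j \<and> ent T r' (j + 1) \<le> ent T r j}"

lemma finite_bump_candidates: "finite (bump_candidates T j r)"
  by (rule finite_subset[of _ "{..<r}"]) (auto simp: bump_candidates_def)

lemma phi_next_eq:
  "phi_next T j r = (if bump_candidates T j r = {} then None else Some (Max (bump_candidates T j r)))"
  by (simp add: phi_next_def bump_candidates_def Let_def)

lemma phi_next_Some:
  assumes "phi_next T j r = Some r'"
  shows "1 \<le> r'" "r' < r" "ent T r j < ent T r' j" "ent T r' (Suc j) \<le> ent T r j"
    and "\<And>q. r' < q \<Longrightarrow> q < r \<Longrightarrow> \<not> (ent T r j < ent T q j \<and> ent T q (Suc j) \<le> ent T r j)"
proof -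
  have ne: "bump_candidates T j r \<noteq> {}" and r': "r' = Max (bump_candidates T j r)"
    using assms by (auto simp: phi_next_eq split: if_splits)
  have "r' \<in> bump_candidates T j r" using ne r' finite_bump_candidates Max_in by blast
  then show "1 \<le> r'" "r' < r" "ent T r j < ent T r' j" "ent T r' (Suc j) \<le> ent T r j"
    by (auto simp: bump_candidates_def)
  fix q assume "r' < q" "q < r"
  show "\<not> (ent T r j < ent T q j \<and> ent T q (Suc j) \<le> ent T r j)"
  proof
    assume "ent T r j < ent T q j \<and> ent T q (Suc j) \<le> ent T r j"
    then have "q \<in> bump_candidates T j r"
      using \<open>q < r\<close> \<open>r' < q\<close> \<open>1 \<le> r'\<close> by (auto simp: bump_candidates_def)
    then have "q \<le> r'" using r' finite_bump_candidates by simp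
    with \<open>r' < q\<close> show False by simp
  qed
qed

lemma phi_next_None:
  assumes "phi_next T j r = None" "1 \<le> q" "q < r"
  shows "\<not> (ent T r j < ent T q j \<and> ent T q (Suc j) \<le> ent T r j)"
  using assms by (auto simp: phi_next_eq bump_candidates_def split: if_splits)

lemma phi_chain_not_Nil: "phi_chain n T j r \<noteq> []"
  by (cases n) auto

lemma phi_chain_nth_0: "phi_chain n T j r ! 0 = r"
  by (cases n) auto

lemma phi_chain_le: "q \<in> set (phi_chain n T j r) \<Longrightarrow> q \<le> r"
proof (induction n arbitrary: r)
  case (Suc n)
  show ?case
  proof (cases "phi_next T j r")
    case (Some r')
    then show ?thesis using Suc phi_next_Some(2)[OF Some] by fastforce
  qed (use Suc.prems in simp)
qed simp

lemma phi_chain_decreasing: "sorted_wrt (>) (phi_chain n T j r)"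
proof (induction n arbitrary: r)
  case (Suc n)
  show ?case
  proof (cases "phi_next T j r")
    case (Some r')
    then have "\<forall>q\<in>set (phi_chain n T j r'). q < r"
      using phi_chain_le phi_next_Some(2) by fastforce
    then show ?thesis using Suc.IH[of r'] Some by simp
  qed simp
qed simp

lemma phi_chain_next:
  "Suc t < length (phi_chain n T j r) \<Longrightarrow>
     phi_next T j (phi_chain n T j r ! t) = Some (phi_chain n T j r ! Suc t)"
proof (induction n arbitrary: r t)
  case (Suc n)
  then show ?case by (cases t) (auto simp: phi_chain_nth_0 split: option.splits)
qed simp

text \<open>Fuel \<open>n\<close> suffices for a chain starting in row \<open>r \<le> n + 1\<close>, because every step strictly
  decreases the row index.\<close>

lemma phi_chain_last: "r \<le> Suc n \<Longrightarrow> phi_next T j (last (phi_chain n T j r)) = None"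
proof (induction n arbitrary: r)
  case 0 then show ?case by (auto simp: phi_next_eq bump_candidates_def)
next
  case (Suc n)
  show ?case
  proof (cases "phi_next T j r")
    case (Some r')
    then have "r' \<le> Suc n" using phi_next_Some(2) Suc.prems by fastforce
    then show ?thesis using Suc.IH[of r'] Some phi_chain_not_Nil[of n T j r'] by simp
  qed simp
qed

section \<open>Editing the rows of a filling\<close>

lemma box_cong:
  assumes "map length U = map length T" shows "box U r c = box T r c"
proof -
  have "length U = length T" using assms by (metis length_map)
  moreover have "k < length T \<Longrightarrow> length (U ! k) = length (T ! k)" for k
    using assms by (metis nth_map \<open>length U = length T\<close>)
  ultimately show ?thesis unfolding box_def
    by (metis (no_types, lifting) Suc_le_eq Suc_pred' le_eq_less_or_eq less_le_trans zero_less_one)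
qed

lemma ent_list_update:
  "ent (U[k := row]) r c =
     (if r = Suc k \<and> k < length U then (if 1 \<le> c \<and> c \<le> length row then row ! (c - 1) else 0)
      else ent U r c)"
  by (auto simp: ent_def nth_list_update)

lemma ent_fold_column_update:
  assumes "distinct (map fst ps)" "\<forall>(a, b)\<in>set ps. box T a j"
  shows "map length (fold (\<lambda>(a, b) U. U[a - 1 := (U ! (a - 1))[j - 1 := f b]]) ps T) = map length T \<and>
    (\<forall>r c. ent (fold (\<lambda>(a, b) U. U[a - 1 := (U ! (a - 1))[j - 1 := f b]]) ps T) r c =
      (if c = j \<and> r \<in> fst ` set ps then f (the (map_of ps r)) else ent T r c))"
  using assms
proof (induction ps arbitrary: T)
  case (Cons p ps)
  obtain a b where p: "p = (a, b)" by (cases p)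
  let ?U = "T[a - 1 := (T ! (a - 1))[j - 1 := f b]]"
  have "box T a j" using Cons.prems p by simp
  then have a: "1 \<le> a" "a \<le> length T" "1 \<le> j" "j \<le> length (T ! (a - 1))" by (auto simp: box_def)
  have lengths: "map length ?U = map length T"
  proof -
    have "a - 1 < length T" using a by simp
    then have "(map length T)[a - 1 := length (T ! (a - 1))] = map length T"
      by (metis list_update_id nth_map length_map)
    then show ?thesis by (simp add: map_update)
  qed
  have ent_U: "ent ?U r c = (if r = a \<and> c = j then f b else ent T r c)" for r c
    using a by (auto simp: ent_list_update ent_def nth_list_update)
  have "distinct (map fst ps)" "a \<notin> fst ` set ps" using Cons.prems(1) p by auto
  moreover have "\<forall>(a, b)\<in>set ps. box ?U a j" using Cons.prems(2) box_cong[OF lengths] by auto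
  ultimately show ?case using Cons.IH[of ?U] lengths ent_U p by auto
qed simp

lemma ent_remove_row:
  assumes "k < length T"
  shows "ent (take k T @ drop (Suc k) T) r c = ent T (if r \<le> k then r else Suc r) c"
proof (cases "r \<le> k")
  case True
  then show ?thesis using assms by (auto simp: ent_def nth_append)
next
  case False
  have len: "length (take k T @ drop (Suc k) T) = length T - 1" using assms by simp
  show ?thesis
  proof (cases "r \<le> length T - 1")
    case True
    have "\<not> r - 1 < k" "length (take k T) = k" using False assms by auto
    then have "(take k T @ drop (Suc k) T) ! (r - 1) = drop (Suc k) T ! (r - 1 - k)"
      by (simp add: nth_append)
    also have "\<dots> = T ! r" using False True assms by (simp add: nth_drop)
    finally show ?thesis using False True assms len unfolding ent_def by auto
  qed (use False assms len in \<open>auto simp: ent_def\<close>)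
qed

lemma tableau_remove_row:
  assumes T: "tableau T" and k: "k < length T"
  shows "tableau (take k T @ drop (Suc k) T)"
proof -
  let ?V = "take k T @ drop (Suc k) T"
  define g where "g r = (if r \<le> k then r else Suc r)" for r
  have ent_V: "ent ?V r c = ent T (g r) c" for r c using ent_remove_row[OF k] g_def by simp
  have g_mono: "r < s \<Longrightarrow> g r < g s" for r s by (auto simp: g_def)
  have "set ?V \<subseteq> set T" using set_take_subset[of k T] set_drop_subset[of "Suc k" T] by auto
  then have "\<forall>row\<in>set ?V. row \<noteq> [] \<and> (\<forall>x\<in>set row. 0 < x)" using T unfolding tableau_def by blast
  moreover have "\<forall>r c. 1 \<le> c \<longrightarrow> ent ?V r (Suc c) \<le> ent ?V r c"
    using tableau_row_decreasing[OF T] ent_V by simp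
  moreover have "\<forall>r s. 1 \<le> r \<and> r < s \<and> 0 < ent ?V s 1 \<longrightarrow> ent ?V r 1 < ent ?V s 1"
  proof (intro allI impI)
    fix r s assume "1 \<le> r \<and> r < s \<and> 0 < ent ?V s 1"
    moreover have "1 \<le> g r" using calculation by (simp add: g_def)
    ultimately show "ent ?V r 1 < ent ?V s 1"
      using tableau_first_col_increasing[OF T _ g_mono] ent_V by simp
  qed
  moreover have "\<forall>r s c. r < s \<and> 1 \<le> c \<and> 0 < ent ?V s (Suc c) \<and> ent ?V s (Suc c) \<le> ent ?V r c
       \<longrightarrow> ent ?V s (Suc c) < ent ?V r (Suc c)"
    using tableau_triple[OF T g_mono] ent_V by simp
  ultimately show ?thesis unfolding tableau_def by blast
qed

lemma ent_append_row:
  "ent (U @ [row]) r c =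
     (if r \<le> length U then ent U r c
      else if r = Suc (length U) \<and> 1 \<le> c \<and> c \<le> length row then row ! (c - 1) else 0)"
  by (auto simp: ent_def nth_append)

section \<open>One application of \<open>\<phi>\<^sub>j\<^sub>+\<^sub>1\<close>\<close>

text \<open>In the notation of the paper, \<open>rs\<close> is the chain \<open>r\<^sub>1, \<dots>, r\<^sub>k\<close>, \<open>bumped\<close> is \<open>\<phi>\<^sub>j\<^sub>+\<^sub>1(T)\<close>
  and \<open>exit_entry\<close> is \<open>T(r\<^sub>k, j)\<close>.\<close>

locale phi_step =
  fixes T :: "nat list list" and j :: nat
  assumes tableau: "tableau T" and j_pos: "1 \<le> j" and j_part: "j \<in> set (map length T)"
begin

abbreviation E where "E \<equiv> ent T"

definition r1 where "r1 = Max {r. 1 \<le> r \<and> r \<le> length T \<and> length (T ! (r - 1)) = j}"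

definition rs where "rs = phi_chain r1 T j r1"

lemma r1_props: "1 \<le> r1" "r1 \<le> length T" "length (T ! (r1 - 1)) = j"
  and r1_max: "1 \<le> s \<Longrightarrow> s \<le> length T \<Longrightarrow> length (T ! (s - 1)) = j \<Longrightarrow> s \<le> r1"
proof -
  let ?S = "{r. 1 \<le> r \<and> r \<le> length T \<and> length (T ! (r - 1)) = j}"
  have fin: "finite ?S" by (rule finite_subset[of _ "{..length T}"]) auto
  obtain k where "k < length T" "length (T ! k) = j" using j_part by (auto simp: in_set_conv_nth)
  then have "Suc k \<in> ?S" by simp
  then have "r1 \<in> ?S" unfolding r1_def using fin Max_in by blast
  then show "1 \<le> r1" "r1 \<le> length T" "length (T ! (r1 - 1)) = j" by auto
  show "s \<le> r1" if "1 \<le> s" "s \<le> length T" "length (T ! (s - 1)) = j"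
    using that fin unfolding r1_def by simp
qed

lemma r1_less_length: "r1 - 1 < length T"
  using r1_props by simp

lemma ent_r1: "0 < E r1 j" "E r1 (Suc j) = 0"
proof -
  have "box T r1 j" "\<not> box T r1 (Suc j)" using r1_props j_pos by (auto simp: box_def)
  then show "0 < E r1 j" "E r1 (Suc j) = 0"
    using tableau_ent_pos_iff[OF tableau] ent_eq_box by blast+
qed

lemma ent_next_col_below_r1: assumes "r1 < s" "0 < E s j" shows "0 < E s (Suc j)"
proof -
  have b: "box T s j" using assms tableau_ent_pos_iff[OF tableau] by blast
  then have "length (T ! (s - 1)) \<noteq> j" using r1_max[of s] assms(1) by (auto simp: box_def)
  then have "box T s (Suc j)" using b by (auto simp: box_def)
  then show ?thesis using tableau_ent_pos_iff[OF tableau] by blast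
qed

lemma ent_r1_less_below: assumes "r1 < s" "0 < E s j" shows "E r1 j < E s (Suc j)"
proof (rule ccontr)
  assume "\<not> ?thesis"
  with tableau_triple[OF tableau assms(1) j_pos ent_next_col_below_r1[OF assms]] ent_r1
  show False by simp
qed

lemma rs_not_Nil: "rs \<noteq> []" and rs_nth_0: "rs ! 0 = r1"
  unfolding rs_def by (simp_all add: phi_chain_not_Nil phi_chain_nth_0)

lemma rs_Cons: "rs = r1 # tl rs"
  using rs_not_Nil rs_nth_0 by (cases rs) auto

lemma last_rs: "last rs = rs ! (length rs - 1)"
  using rs_not_Nil by (simp add: last_conv_nth)

lemma rs_decreasing: "t < u \<Longrightarrow> u < length rs \<Longrightarrow> rs ! u < rs ! t"
  using phi_chain_decreasing unfolding rs_def by (simp add: sorted_wrt_iff_nth_less)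

lemma distinct_rs: "distinct rs"
  using rs_decreasing by (metis distinct_conv_nth nat_neq_iff less_irrefl)

lemma r1_notin_tl_rs: "r1 \<notin> set (tl rs)"
  using distinct_rs rs_Cons by (metis distinct.simps(2))

lemma in_rs_iff: "r \<in> set rs \<longleftrightarrow> r = r1 \<or> r \<in> set (tl rs)"
  using rs_Cons by (metis set_ConsD list.set_intros)

lemma in_tl_rs_iff: "r \<in> set (tl rs) \<longleftrightarrow> (\<exists>t. Suc t < length rs \<and> r = rs ! Suc t)"
proof
  assume "r \<in> set (tl rs)"
  then obtain t where "t < length (tl rs)" "r = tl rs ! t" by (auto simp: in_set_conv_nth)
  then show "\<exists>t. Suc t < length rs \<and> r = rs ! Suc t" by (auto simp: nth_tl intro!: exI[of _ t])
next
  assume "\<exists>t. Suc t < length rs \<and> r = rs ! Suc t"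
  then obtain t where "Suc t < length rs" "r = rs ! Suc t" by blast
  then show "r \<in> set (tl rs)" by (auto simp: in_set_conv_nth nth_tl intro!: exI[of _ t])
qed

lemma rs_next: "Suc t < length rs \<Longrightarrow> phi_next T j (rs ! t) = Some (rs ! Suc t)"
  unfolding rs_def by (rule phi_chain_next)

lemma phi_next_last_rs: "phi_next T j (last rs) = None"
  unfolding rs_def by (rule phi_chain_last) simp

lemma ent_rs_pos: "t < length rs \<Longrightarrow> 0 < E (rs ! t) j"
proof (induction t)
  case 0 then show ?case using rs_nth_0 ent_r1 by simp
next
  case (Suc t) then show ?case using phi_next_Some(3)[OF rs_next[OF Suc.prems]] by simp
qed

lemma ent_rs_increasing: "t < u \<Longrightarrow> u < length rs \<Longrightarrow> E (rs ! t) j < E (rs ! u) j"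
proof (induction u)
  case (Suc u)
  have "E (rs ! u) j < E (rs ! Suc u) j" using phi_next_Some(3)[OF rs_next[OF Suc.prems(2)]] by simp
  then show ?case using Suc by (cases "t = u") auto
qed simp

lemma ent_rs_le_last: "t < length rs \<Longrightarrow> E (rs ! t) j \<le> E (last rs) j"
  using ent_rs_increasing[of t "length rs - 1"] last_rs
  by (cases "t = length rs - 1") (auto simp: less_imp_le)

text \<open>The key invariant: it gives both the triple rule for \<open>bumped\<close> and the fact that the
  exiting entry fits below it.\<close>

lemma ent_rs_less_next_col:
  "t < length rs \<Longrightarrow> s \<notin> set rs \<Longrightarrow> rs ! t < s \<Longrightarrow> E (rs ! t) j < E s j
   \<Longrightarrow> E (rs ! t) j < E s (Suc j)"
proof (induction t arbitrary: s)
  case 0 then show ?case using ent_r1_less_below rs_nth_0 by simp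
next
  case (Suc t)
  let ?a = "rs ! Suc t" and ?b = "rs ! t"
  note succ = phi_next_Some[OF rs_next[OF Suc.prems(1)]]
  show ?case
  proof (rule ccontr)
    assume "\<not> ?thesis"
    then have le: "E s (Suc j) \<le> E ?a j" by simp
    have b_less: "E ?b j < E s (Suc j)"
    proof (cases "s < ?b")
      case True
      from succ(5)[OF Suc.prems(3) True] Suc.prems(4) succ(3) show ?thesis by auto
    next
      case False
      moreover have "s \<noteq> ?b" using Suc.prems(1,2) by auto
      ultimately show ?thesis using Suc.IH[of s] Suc.prems succ(3) by simp
    qed
    have "E s (Suc j) < E ?a (Suc j)"
      using tableau_triple[OF tableau Suc.prems(3) j_pos _ le] b_less by simp
    then show False using succ(4) b_less by simp
  qed
qed

lemma ent_less_prev_rs: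
  assumes "Suc t < length rs" "s \<notin> set rs" "rs ! Suc t < s" "0 < E s j"
    and "E s j < E (rs ! Suc t) j"
  shows "E s j < E (rs ! t) j"
proof (rule ccontr)
  let ?a = "rs ! Suc t" and ?b = "rs ! t"
  note succ = phi_next_Some[OF rs_next[OF assms(1)]]
  assume "\<not> ?thesis"
  moreover have "s \<noteq> ?b" using assms(1,2) by auto
  moreover have "0 < E ?b j" using ent_rs_pos assms(1) by simp
  ultimately have b_less: "E ?b j < E s j"
    using tableau_col_distinct[OF tableau, of s ?b j] tableau_col_distinct[OF tableau, of ?b s j] assms(4)
    by (metis linorder_neqE_nat)
  have b_less': "E ?b j < E s (Suc j)"
  proof (cases "s < ?b")
    case True
    from succ(5)[OF assms(3) True] b_less show ?thesis by auto
  next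
    case False
    then have "?b < s" using \<open>s \<noteq> ?b\<close> by simp
    then show ?thesis using ent_rs_less_next_col[of t s] assms b_less by simp
  qed
  have "E s (Suc j) \<le> E s j" using tableau_row_decreasing[OF tableau j_pos] by simp
  then have "E s (Suc j) < E ?a (Suc j)"
    using tableau_triple[OF tableau assms(3) j_pos] b_less' assms(5) by simp
  then show False using succ(4) b_less' by simp
qed

lemma ent_last_rs_less_next_col:
  assumes "s \<notin> set rs" "E (last rs) j < E s j"
  shows "E (last rs) j < E s (Suc j)"
proof (cases "s < last rs")
  case True
  have "1 \<le> s" using assms(2) tableau_ent_pos_iff[OF tableau, of s j] by (auto simp: box_def)
  from phi_next_None[OF phi_next_last_rs this True] assms(2) show ?thesis by auto
next
  case False
  moreover have "s \<noteq> last rs" using assms(1) rs_not_Nil by auto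
  ultimately have "last rs < s" by simp
  then show ?thesis using ent_rs_less_next_col[of "length rs - 1" s] assms rs_not_Nil last_rs by simp
qed

definition prev_row where "prev_row r = the (map_of (zip (tl rs) rs) r)"

lemma map_fst_zip_tl_rs: "map fst (zip (tl rs) rs) = tl rs"
  by (simp add: map_fst_zip_take)

lemma prev_row_nth: assumes "Suc t < length rs" shows "prev_row (rs ! Suc t) = rs ! t"
proof -
  have "distinct (map fst (zip (tl rs) rs))"
    using map_fst_zip_tl_rs distinct_rs by (simp add: distinct_tl)
  moreover have "(rs ! Suc t, rs ! t) \<in> set (zip (tl rs) rs)"
    using assms by (auto simp: set_zip nth_tl intro!: exI[of _ t])
  ultimately show ?thesis unfolding prev_row_def by (simp add: map_of_is_SomeI)
qed

lemma prev_row_bounds: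
  assumes "r \<in> set (tl rs)"
  shows "r < prev_row r" "E (prev_row r) j < E r j" "E r (Suc j) \<le> E (prev_row r) j"
proof -
  obtain t where t: "Suc t < length rs" "r = rs ! Suc t" using assms in_tl_rs_iff by blast
  show "r < prev_row r" "E (prev_row r) j < E r j" "E r (Suc j) \<le> E (prev_row r) j"
    using phi_next_Some[OF rs_next[OF t(1)]] t prev_row_nth[OF t(1)] by auto
qed

definition T1 where
  "T1 = fold (\<lambda>(a, b) U. U[a - 1 := (U ! (a - 1))[j - 1 := ent T b j]]) (zip (tl rs) rs) T"

lemma lengths_T1: "map length T1 = map length T"
  and ent_T1: "ent T1 r c = (if c = j \<and> r \<in> set (tl rs) then E (prev_row r) j else E r c)"
proof -
  have distinct: "distinct (map fst (zip (tl rs) rs))"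
    using map_fst_zip_tl_rs distinct_rs by (simp add: distinct_tl)
  have "box T a j" if "(a, b) \<in> set (zip (tl rs) rs)" for a b
  proof -
    have "a \<in> set (tl rs)" using that map_fst_zip_tl_rs by (metis fst_conv image_eqI list.set_map)
    then obtain t where "Suc t < length rs" "a = rs ! Suc t" using in_tl_rs_iff by blast
    then show "box T a j" using ent_rs_pos tableau_ent_pos_iff[OF tableau] by auto
  qed
  then have "\<forall>(a, b)\<in>set (zip (tl rs) rs). box T a j" by blast
  note fold = ent_fold_column_update[OF distinct this, of "\<lambda>b. ent T b j"]
  show "map length T1 = map length T" using fold unfolding T1_def by simp
  have "fst ` set (zip (tl rs) rs) = set (tl rs)" using map_fst_zip_tl_rs by (metis list.set_map)
  then show "ent T1 r c = (if c = j \<and> r \<in> set (tl rs) then E (prev_row r) j else E r c)"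
    using fold unfolding T1_def prev_row_def by simp
qed

lemma length_T1_r1: "length (T1 ! (r1 - 1)) = j"
  using lengths_T1 r1_props r1_less_length by (metis nth_map length_map)

lemma phi_eq:
  "phi j T = (let row' = butlast (T1 ! (r1 - 1)) in
     (if row' = [] then take (r1 - 1) T1 @ drop r1 T1 else T1[r1 - 1 := row'], E (last rs) j))"
  unfolding phi_def Let_def r1_def[symmetric] rs_def[symmetric] T1_def[symmetric] by simp

definition bumped where "bumped = fst (phi j T)"

definition exit_entry where "exit_entry = snd (phi j T)"

lemma exit_entry_eq: "exit_entry = E (last rs) j"
  unfolding exit_entry_def phi_eq by (simp add: Let_def)

lemma exit_entry_pos: "0 < exit_entry"
  using ent_rs_pos[of "length rs - 1"] rs_not_Nil last_rs exit_entry_eq by simp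

lemma exit_entry_ge_rs: "t < length rs \<Longrightarrow> E (rs ! t) j \<le> exit_entry"
  using ent_rs_le_last exit_entry_eq by simp

context
  assumes j2: "2 \<le> j"
begin

lemma bumped_eq_ge2: "bumped = T1[r1 - 1 := butlast (T1 ! (r1 - 1))]"
proof -
  have "length (butlast (T1 ! (r1 - 1))) \<noteq> 0" using length_T1_r1 j2 by simp
  then have "butlast (T1 ! (r1 - 1)) \<noteq> []" by (metis list.size(3))
  then show ?thesis unfolding bumped_def phi_eq by (simp add: Let_def)
qed

lemma lengths_bumped_ge2: "map length bumped = (map length T)[r1 - 1 := j - 1]"
  using bumped_eq_ge2 lengths_T1 length_T1_r1 by (simp add: map_update)

lemma length_bumped_ge2: "length bumped = length T"
  using lengths_bumped_ge2 by (metis length_map length_list_update)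

lemma ent_bumped_ge2:
  "ent bumped r c =
     (if c = j then (if r = r1 then 0 else if r \<in> set (tl rs) then E (prev_row r) j else E r j)
      else E r c)"
proof -
  have "length T1 = length T" using lengths_T1 by (metis length_map)
  then have k: "r1 - 1 < length T1" using r1_less_length by simp
  have "ent bumped r c = (if r = r1 \<and> c = j then 0 else ent T1 r c)"
  proof (cases "r = r1")
    case True
    define row where "row = T1 ! (r1 - 1)"
    have length_row: "length row = j" using length_T1_r1 row_def by simp
    have "r1 = Suc (r1 - 1)" using r1_props by simp
    then have "ent bumped r1 c =
        (if 1 \<le> c \<and> c \<le> length (butlast row) then butlast row ! (c - 1) else 0)"
      using bumped_eq_ge2 k unfolding row_def by (metis ent_list_update)
    then have "ent bumped r1 c = (if 1 \<le> c \<and> c \<le> j - 1 then row ! (c - 1) else 0)"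
      using length_row by (auto simp: nth_butlast)
    moreover have "ent T1 r1 c = (if 1 \<le> c \<and> c \<le> j then row ! (c - 1) else 0)"
      using length_row k r1_props unfolding row_def ent_def by auto
    ultimately show ?thesis using True by auto
  next
    case False
    then have "r \<noteq> Suc (r1 - 1)" using r1_props by simp
    then show ?thesis using bumped_eq_ge2 False by (simp add: ent_list_update)
  qed
  then show ?thesis using ent_T1 r1_notin_tl_rs by auto
qed

lemma ent_bumped_le: "ent bumped r c \<le> E r c"
  using ent_bumped_ge2 prev_row_bounds by (auto simp: less_imp_le)

lemma box_bumped_iff: "box bumped r c \<longleftrightarrow> box T r c \<and> \<not> (r = r1 \<and> c = j)"
proof -
  have length_row: "length (bumped ! k) = (if k = r1 - 1 then j - 1 else length (T ! k))"
    if "k < length T" for k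
  proof -
    have "length (bumped ! k) = map length bumped ! k" using that length_bumped_ge2 by simp
    also have "\<dots> = (if k = r1 - 1 then j - 1 else length (T ! k))"
      using lengths_bumped_ge2 that by (simp add: nth_list_update)
    finally show ?thesis .
  qed
  show ?thesis
  proof (cases "1 \<le> r \<and> r \<le> length T")
    case True
    then have "r - 1 < length T" by (cases r) auto
    note L = length_row[OF this]
    show ?thesis
    proof (cases "r = r1")
      case True then show ?thesis using L length_bumped_ge2 r1_props unfolding box_def by auto
    next
      case False
      then have "r - 1 \<noteq> r1 - 1" using r1_props \<open>1 \<le> r \<and> r \<le> length T\<close> by auto
      then show ?thesis using L length_bumped_ge2 False unfolding box_def by auto
    qed
  qed (use length_bumped_ge2 in \<open>auto simp: box_def\<close>)
qed

lemma bumped_triple_from_chain: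
  assumes c: "j = Suc c" "1 \<le> c" and "r < s" "s \<in> set (tl rs)" "ent bumped s j \<le> E r c"
  shows "ent bumped s j < ent bumped r j"
proof -
  obtain u where u: "Suc u < length rs" "s = rs ! Suc u" using assms(4) in_tl_rs_iff by blast
  have s_ne: "s \<noteq> r1" using assms(4) r1_notin_tl_rs by auto
  have ent_s: "ent bumped s j = E (rs ! u) j" using ent_bumped_ge2 s_ne assms(4) prev_row_nth[OF u(1)] u by simp
  have "r < rs ! u" using assms(3) rs_decreasing[of u "Suc u"] u by simp
  moreover have "0 < E (rs ! u) j" using ent_rs_pos u(1) by simp
  ultimately have less_r: "E (rs ! u) j < E r j"
    using tableau_triple[OF tableau _ c(2)] assms(5) ent_s c(1) by simp
  show ?thesis
  proof (cases "r \<in> set (tl rs)")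
    case True
    then obtain t where t: "Suc t < length rs" "r = rs ! Suc t" using in_tl_rs_iff by blast
    have "u < t"
    proof (rule ccontr)
      assume "\<not> u < t"
      then have "s \<le> r" using u t rs_decreasing[of "Suc t" "Suc u"] by (cases "t = u") auto
      with assms(3) show False by simp
    qed
    then have "E (rs ! u) j < E (rs ! t) j" using ent_rs_increasing t by simp
    moreover have "r \<noteq> r1" using True r1_notin_tl_rs by auto
    ultimately show ?thesis using ent_s ent_bumped_ge2 True prev_row_nth[OF t(1)] t by simp
  next
    case False
    have "r \<noteq> r1"
    proof
      assume "r = r1"
      then have "s < r" using u rs_decreasing[of 0 "Suc u"] rs_nth_0 by simp
      with assms(3) show False by simp
    qed
    then show ?thesis using ent_s ent_bumped_ge2 False less_r by simp
  qed
qed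

lemma bumped_triple_off_chain:
  assumes c: "j = Suc c" "1 \<le> c" and "r < s" "s \<notin> set rs" "0 < E s j" "E s j \<le> E r c"
  shows "E s j < ent bumped r j"
proof -
  have less_r: "E s j < E r j" using tableau_triple[OF tableau assms(3) c(2)] assms(5,6) c(1) by simp
  consider "r = r1" | "r \<in> set (tl rs)" | "r \<notin> set rs" using in_rs_iff by blast
  then show ?thesis
  proof cases
    case 1
    have "E r1 j < E s (Suc j)" using ent_r1_less_below assms(3,5) 1 by simp
    moreover have "E s (Suc j) \<le> E s j" using tableau_row_decreasing[OF tableau j_pos] by simp
    ultimately show ?thesis using less_r 1 by simp
  next
    case 2
    then obtain t where t: "Suc t < length rs" "r = rs ! Suc t" using in_tl_rs_iff by blast
    have "E s j < E (rs ! t) j" using ent_less_prev_rs[OF t(1) assms(4)] t assms(3,5) less_r by simp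
    moreover have "r \<noteq> r1" using 2 r1_notin_tl_rs by auto
    ultimately show ?thesis using ent_bumped_ge2 2 prev_row_nth[OF t(1)] t by simp
  next
    case 3
    then show ?thesis using ent_bumped_ge2 in_rs_iff less_r by auto
  qed
qed

lemma bumped_first_box: "1 \<le> r \<Longrightarrow> r \<le> length bumped \<Longrightarrow> box bumped r 1"
proof -
  assume r: "1 \<le> r" "r \<le> length bumped"
  then have "r - 1 < length T" using length_bumped_ge2 by simp
  then have "T ! (r - 1) \<noteq> []" using tableau unfolding tableau_def by (meson nth_mem)
  then have "box T r 1" using r length_bumped_ge2 by (auto simp: box_def Suc_le_eq)
  then show ?thesis using box_bumped_iff j2 by simp
qed

lemma ent_bumped_pos: "box bumped r c \<Longrightarrow> 0 < ent bumped r c"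
proof -
  assume "box bumped r c"
  then have box: "box T r c" and not_r1: "\<not> (r = r1 \<and> c = j)" using box_bumped_iff by auto
  show ?thesis
  proof (cases "c = j \<and> r \<in> set (tl rs)")
    case True
    then obtain t where t: "Suc t < length rs" "r = rs ! Suc t" using in_tl_rs_iff by blast
    then show ?thesis
      using True ent_bumped_ge2 ent_rs_pos[of t] prev_row_nth[OF t(1)] r1_notin_tl_rs by auto
  next
    case False
    then show ?thesis using ent_bumped_ge2 box tableau_ent_pos_iff[OF tableau] not_r1 by auto
  qed
qed

lemma bumped_row_decreasing: "1 \<le> c \<Longrightarrow> ent bumped r (Suc c) \<le> ent bumped r c"
proof -
  assume c: "1 \<le> c"
  consider "Suc c = j" | "c = j" | "Suc c \<noteq> j \<and> c \<noteq> j" by blast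
  then show ?thesis
  proof cases
    case 1
    have "ent bumped r (Suc c) \<le> E r (Suc c)" by (rule ent_bumped_le)
    also have "\<dots> \<le> E r c" using tableau_row_decreasing[OF tableau c] .
    also have "\<dots> = ent bumped r c" using ent_bumped_ge2 1 by simp
    finally show ?thesis .
  next
    case 2
    have "E r (Suc j) \<le> ent bumped r j"
      using ent_bumped_ge2[of r j] ent_r1 prev_row_bounds[of r] tableau_row_decreasing[OF tableau j_pos, of r]
      by auto
    then show ?thesis using ent_bumped_ge2 2 by simp
  next
    case 3 then show ?thesis using ent_bumped_ge2 tableau_row_decreasing[OF tableau c] by simp
  qed
qed

lemma bumped_triple:
  assumes h: "r < s" "1 \<le> c" "0 < ent bumped s (Suc c)" "ent bumped s (Suc c) \<le> ent bumped r c"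
  shows "ent bumped s (Suc c) < ent bumped r (Suc c)"
proof -
  consider "Suc c = j" | "c = j" | "Suc c \<noteq> j \<and> c \<noteq> j" by blast
  then show ?thesis
  proof cases
    case 1
    have r_c: "ent bumped r c = E r c" using ent_bumped_ge2 1 by simp
    consider "s = r1" | "s \<in> set (tl rs)" | "s \<notin> set rs" using in_rs_iff by blast
    then show ?thesis
    proof cases
      case 1 then show ?thesis using h(3) ent_bumped_ge2 \<open>Suc c = j\<close> by simp
    next
      case 2 then show ?thesis using bumped_triple_from_chain[of c r s] h \<open>Suc c = j\<close> r_c by simp
    next
      case 3
      then have "ent bumped s j = E s j" using ent_bumped_ge2 in_rs_iff by auto
      then show ?thesis using bumped_triple_off_chain[of c r s] 3 h \<open>Suc c = j\<close> r_c by simp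
    qed
  next
    case 2
    have "ent bumped r c \<le> E r c" by (rule ent_bumped_le)
    then show ?thesis using h ent_bumped_ge2 tableau_triple[OF tableau h(1,2)] 2 by simp
  next
    case 3 then show ?thesis using h ent_bumped_ge2 tableau_triple[OF tableau h(1,2)] by simp
  qed
qed

lemma tableau_bumped_ge2: "tableau bumped"
proof (rule tableauI[OF bumped_first_box ent_bumped_pos bumped_row_decreasing _ bumped_triple])
  show "ent bumped r 1 < ent bumped s 1" if "1 \<le> r" "r < s" "0 < ent bumped s 1" for r s
    using that ent_bumped_ge2 tableau_first_col_increasing[OF tableau] j2 by simp
qed

end

lemma rs_eq_j1: assumes "j = 1" shows "rs = [r1]"
proof -
  have "phi_next T j r1 = None"
  proof (rule ccontr)
    assume "phi_next T j r1 \<noteq> None"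
    then obtain r' where "phi_next T j r1 = Some r'" by blast
    note succ = phi_next_Some[OF this]
    have "E r' 1 < E r1 1" using tableau_first_col_increasing[OF tableau succ(1,2)] ent_r1 assms by simp
    then show False using succ(3) assms by simp
  qed
  moreover obtain n where "r1 = Suc n" using r1_props by (cases r1) auto
  ultimately show ?thesis unfolding rs_def by simp
qed

lemma bumped_eq_j1: assumes "j = 1" shows "bumped = take (r1 - 1) T @ drop r1 T"
proof -
  have "T1 = T" using rs_eq_j1[OF assms] unfolding T1_def by simp
  moreover have "butlast (T1 ! (r1 - 1)) = []" using length_T1_r1 assms
    by (metis length_butlast length_0_conv diff_self_eq_0)
  ultimately show ?thesis unfolding bumped_def phi_eq by (simp add: Let_def)
qed

lemma ent_bumped_j1: "j = 1 \<Longrightarrow> ent bumped r c = E (if r < r1 then r else Suc r) c"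
  using bumped_eq_j1 ent_remove_row[OF r1_less_length] r1_props by (cases r1) auto

lemma tableau_bumped: "tableau bumped"
proof (cases "j = 1")
  case True
  then show ?thesis using bumped_eq_j1 tableau_remove_row[OF tableau r1_less_length] r1_props
    by (cases r1) auto
next
  case False then show ?thesis using tableau_bumped_ge2 j_pos by simp
qed

lemma greatest_r1: "(GREATEST k. k < length (map length T) \<and> map length T ! k = j) = r1 - 1"
proof (rule Greatest_equality)
  show "r1 - 1 < length (map length T) \<and> map length T ! (r1 - 1) = j"
    using r1_props by (cases r1) auto
  fix k assume k: "k < length (map length T) \<and> map length T ! k = j"
  then have "length (T ! k) = j" using nth_map[of k T length] by simp
  then show "k \<le> r1 - 1" using r1_max[of "Suc k"] k by simp
qed

lemma bumped_shape: "map length bumped = dop j (map length T)"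
proof (cases "j = 1")
  case True
  have "map length bumped = take (r1 - 1) (map length T) @ drop (Suc (r1 - 1)) (map length T)"
    using bumped_eq_j1[OF True] r1_props by (simp add: take_map drop_map)
  then show ?thesis using j_part greatest_r1 True unfolding dop_def by (simp add: Let_def)
next
  case False
  then show ?thesis using lengths_bumped_ge2 j_part greatest_r1 j_pos unfolding dop_def by (simp add: Let_def)
qed

lemma part_bumped: "2 \<le> j \<Longrightarrow> j - 1 \<in> set (map length bumped)"
  using lengths_bumped_ge2 r1_less_length by (metis length_list_update length_map nth_list_update_eq nth_mem)

end

text \<open>\<open>fits_below T c y\<close>: the entry \<open>y\<close> may occupy column \<open>c + 1\<close> of a new row appended below \<open>T\<close>
  without violating the triple rule.\<close>

definition fits_below :: "nat list list \<Rightarrow> nat \<Rightarrow> nat \<Rightarrow> bool" where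
  "fits_below T c y \<longleftrightarrow> (\<forall>r. 0 < ent T r c \<and> y \<le> ent T r c \<longrightarrow> y < ent T r (Suc c))"

context phi_step
begin

lemma exit_entry_fits_below_bumped: "fits_below bumped j exit_entry"
  unfolding fits_below_def
proof (intro allI impI)
  fix r assume r: "0 < ent bumped r j \<and> exit_entry \<le> ent bumped r j"
  show "exit_entry < ent bumped r (Suc j)"
  proof (cases "j = 1")
    case True
    define q where "q = (if r < r1 then r else Suc r)"
    have ent_q: "ent bumped r c = E q c" for c using ent_bumped_j1[OF True] q_def by simp
    have "q \<noteq> r1" by (auto simp: q_def)
    then have "E q j \<noteq> E r1 j"
      using tableau_col_distinct[OF tableau, of q r1 j] tableau_col_distinct[OF tableau, of r1 q j] r ent_q ent_r1
      by (metis nat_neq_iff)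
    moreover have "exit_entry = E r1 j" "rs = [r1]" using exit_entry_eq rs_eq_j1[OF True] by simp_all
    ultimately show ?thesis
      using ent_last_rs_less_next_col[of q] r ent_q \<open>q \<noteq> r1\<close> by simp
  next
    case False
    then have j2: "2 \<le> j" using j_pos by simp
    have "r \<noteq> r1" using r ent_bumped_ge2[OF j2] by auto
    have "r \<notin> set (tl rs)"
    proof
      assume "r \<in> set (tl rs)"
      then obtain t where t: "Suc t < length rs" "r = rs ! Suc t" using in_tl_rs_iff by blast
      have "ent bumped r j = E (rs ! t) j"
        using ent_bumped_ge2[OF j2] \<open>r \<noteq> r1\<close> \<open>r \<in> set (tl rs)\<close> prev_row_nth[OF t(1)] t by simp
      moreover have "E (rs ! t) j < E (rs ! Suc t) j" using ent_rs_increasing t by simp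
      moreover have "E (rs ! Suc t) j \<le> exit_entry" using exit_entry_ge_rs[OF t(1)] .
      ultimately show False using r by simp
    qed
    then have ent_r: "ent bumped r j = E r j" and notin: "r \<notin> set rs"
      using ent_bumped_ge2[OF j2] \<open>r \<noteq> r1\<close> in_rs_iff by auto
    have "r \<noteq> last rs" using notin rs_not_Nil by auto
    then have "E r j \<noteq> E (last rs) j"
      using tableau_col_distinct[OF tableau, of r "last rs" j] tableau_col_distinct[OF tableau, of "last rs" r j]
        r ent_r exit_entry_pos exit_entry_eq
      by (metis nat_neq_iff)
    then have "E (last rs) j < E r j" using r ent_r exit_entry_eq by simp
    then show ?thesis using ent_last_rs_less_next_col[OF notin] exit_entry_eq ent_bumped_ge2[OF j2] by simp
  qed
qed

lemma fits_below_bumped: "j < c \<Longrightarrow> fits_below T c y \<Longrightarrow> fits_below bumped c y"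
  using ent_bumped_j1 ent_bumped_ge2 j_pos unfolding fits_below_def
  by (cases "j = 1") auto

end

lemma phi_step_bumped:
  assumes "phi_step T j" "2 \<le> j"
  shows "phi_step (phi_step.bumped T j) (j - 1)"
  using phi_step.tableau_bumped[OF assms(1)] phi_step.part_bumped[OF assms] assms(2)
  unfolding phi_step_def by simp

text \<open>If the next exiting entry \<open>x\<close> were smaller, every chain row \<open>q\<close> with \<open>x < T(q, j)\<close> would also
  have \<open>x < bumped(q, j)\<close>, since \<open>q\<close> then lies off the next chain. Walking back along the chain
  this reaches \<open>r\<^sub>1\<close>, whose box in column \<open>j\<close> has been deleted.\<close>

lemma (in phi_step) exit_entry_le_next:
  assumes j2: "2 \<le> j" shows "exit_entry \<le> phi_step.exit_entry bumped (j - 1)"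
proof -
  interpret next_step: phi_step bumped "j - 1" using phi_step_bumped[OF _ j2] phi_step_axioms by simp
  let ?x = "next_step.exit_entry"
  have on_chain: "q \<in> set next_step.rs \<Longrightarrow> ent bumped q (j - 1) \<le> ?x" for q
    using next_step.exit_entry_ge_rs by (metis in_set_conv_nth)
  have below_bumped: "?x < ent bumped q j" if "?x < E q j" for q
  proof -
    have "E q j \<le> E q (j - 1)" using tableau_row_antimono[OF tableau, of "j - 1" j q] j2 by simp
    moreover have "j - 1 \<noteq> j" using j2 by simp
    ultimately have q_big: "?x < ent bumped q (j - 1)" using that ent_bumped_ge2[OF j2, of q "j - 1"] by simp
    then have "q \<notin> set next_step.rs" using on_chain by force
    with next_step.ent_last_rs_less_next_col[of q] q_big next_step.exit_entry_eq
    show ?thesis using j2 by simp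
  qed
  have "t < length rs \<Longrightarrow> ?x < E (rs ! t) j \<Longrightarrow> False" for t
  proof (induction t)
    case 0
    then show ?case using below_bumped[of r1] rs_nth_0 ent_bumped_ge2[OF j2, of r1 j] by simp
  next
    case (Suc t)
    let ?q = "rs ! Suc t"
    have "?q \<in> set (tl rs)" using in_tl_rs_iff Suc.prems(1) by blast
    moreover have "?q \<noteq> r1" using calculation r1_notin_tl_rs by auto
    ultimately have "ent bumped ?q j = E (rs ! t) j"
      using ent_bumped_ge2[OF j2] prev_row_nth[OF Suc.prems(1)] by simp
    then show ?case using below_bumped[of ?q] Suc.IH Suc.prems by simp
  qed
  from this[of "length rs - 1"] show ?thesis using exit_entry_eq last_rs rs_not_Nil by fastforce
qed

section \<open>Iterating: the map \<open>\<mu>\<^sub>i\<close>\<close>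

lemma phi_step_SucI: "tableau U \<Longrightarrow> Suc m \<in> set (map length U) \<Longrightarrow> phi_step U (Suc m)"
  by (simp add: phi_step_def)

lemma (in phi_step) mu_aux_eq:
  assumes "j = Suc m"
  shows "mu_aux j T = (fst (mu_aux m bumped), exit_entry # snd (mu_aux m bumped))"
proof -
  have "phi j T = (bumped, exit_entry)" by (simp add: bumped_def exit_entry_def)
  then have "phi (Suc m) T = (bumped, exit_entry)" unfolding assms .
  then show ?thesis unfolding assms by (simp add: case_prod_beta)
qed

lemma (in phi_step) bumped_ready:
  assumes "j = Suc m" shows "tableau bumped" "m = 0 \<or> m \<in> set (map length bumped)"
proof -
  show "tableau bumped" by (rule tableau_bumped)
  show "m = 0 \<or> m \<in> set (map length bumped)"
    using part_bumped assms by (cases m) auto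
qed

lemma length_mu_aux_exits: "length (snd (mu_aux m U)) = m"
  by (induction m arbitrary: U) (auto simp: case_prod_beta)

lemma hd_mu_aux_exits: "hd (snd (mu_aux (Suc m) U)) = snd (phi (Suc m) U)"
  by (simp add: case_prod_beta)

lemma tableau_mu_aux:
  assumes "tableau U" "m = 0 \<or> m \<in> set (map length U)"
  shows "tableau (fst (mu_aux m U)) \<and> map length (fst (mu_aux m U)) = vop m (map length U)"
  using assms
proof (induction m arbitrary: U)
  case (Suc m)
  interpret phi_step U "Suc m" using Suc.prems by (simp add: phi_step_SucI)
  show ?case using Suc.IH[OF bumped_ready[OF refl]] mu_aux_eq bumped_shape by simp
qed simp

lemma mu_aux_exits_sorted_pos:
  assumes "tableau U" "m = 0 \<or> m \<in> set (map length U)"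
  shows "sorted (snd (mu_aux m U)) \<and> (\<forall>h\<in>set (snd (mu_aux m U)). 0 < h)"
  using assms
proof (induction m arbitrary: U)
  case (Suc m)
  interpret phi_step U "Suc m" using Suc.prems by (simp add: phi_step_SucI)
  let ?H = "snd (mu_aux m bumped)"
  have IH: "sorted ?H" "\<forall>h\<in>set ?H. 0 < h" using Suc.IH[OF bumped_ready[OF refl]] by auto
  have "exit_entry \<le> hd ?H" if "?H \<noteq> []"
  proof -
    have "m \<noteq> 0" using that length_mu_aux_exits[of m bumped] by (metis length_0_conv)
    then obtain m' where m': "m = Suc m'" by (cases m) auto
    then have "phi_step bumped m" using phi_step_bumped[OF phi_step_axioms] by simp
    then have "hd ?H = phi_step.exit_entry bumped m"
      using m' hd_mu_aux_exits by (simp add: phi_step.exit_entry_def)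
    then show ?thesis using exit_entry_le_next m' by simp
  qed
  then have "sorted (exit_entry # ?H)" using IH(1) by (cases ?H) auto
  then show ?case using IH(2) exit_entry_pos mu_aux_eq by simp
qed simp

lemma fits_below_mu_aux:
  assumes "tableau U" "m = 0 \<or> m \<in> set (map length U)"
  shows "m < c \<Longrightarrow> fits_below U c y \<Longrightarrow> fits_below (fst (mu_aux m U)) c y"
  using assms
proof (induction m arbitrary: U)
  case (Suc m)
  interpret phi_step U "Suc m" using Suc.prems by (simp add: phi_step_SucI)
  show ?case using Suc.IH[of bumped] bumped_ready[OF refl] Suc.prems fits_below_bumped mu_aux_eq by simp
qed simp

lemma mu_aux_exits_fit_below:
  assumes "tableau U" "m = 0 \<or> m \<in> set (map length U)"
  shows "1 \<le> c \<Longrightarrow> c \<le> m \<Longrightarrow> fits_below (fst (mu_aux m U)) c (snd (mu_aux m U) ! (m - c))"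
  using assms
proof (induction m arbitrary: U)
  case (Suc m)
  interpret phi_step U "Suc m" using Suc.prems by (simp add: phi_step_SucI)
  show ?case
  proof (cases "c = Suc m")
    case True
    then show ?thesis
      using fits_below_mu_aux[OF bumped_ready[OF refl]] exit_entry_fits_below_bumped mu_aux_eq by simp
  next
    case False
    then have "Suc m - c = Suc (m - c)" using Suc.prems by simp
    then show ?thesis using Suc.IH[of bumped] bumped_ready[OF refl] Suc.prems False mu_aux_eq by simp
  qed
qed simp

section \<open>The new bottom row\<close>

lemma ent_append_bottom_row:
  assumes "length H = i - 1"
  shows "ent (T @ [0 # rev H]) r c =
    (if r \<le> length T then ent T r c
     else if r = Suc (length T) \<and> 2 \<le> c \<and> c \<le> i then H ! (i - c) else 0)"
proof -
  have "(0 # rev H) ! (c - 1) = H ! (i - c)" if "2 \<le> c" "c \<le> i" for c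
  proof -
    have "c - 1 = Suc (c - 2)" using that by simp
    then have "(0 # rev H) ! (c - 1) = rev H ! (c - 2)" by simp
    also have "\<dots> = H ! (length H - Suc (c - 2))" using that assms by (simp add: rev_nth)
    also have "length H - Suc (c - 2) = i - c" using that assms by simp
    finally show ?thesis .
  qed
  moreover have "length (0 # rev H) = i" if "2 \<le> c" "c \<le> i" for c using that assms by simp
  ultimately show ?thesis using assms unfolding ent_append_row
    by (cases "c = 1") (auto simp: not_less_eq_eq)
qed

lemma filled_append_bottom_row:
  "filled (map length T @ [i]) [1] r c \<longleftrightarrow>
     (r \<le> length T \<and> box T r c) \<or> (r = Suc (length T) \<and> 2 \<le> c \<and> c \<le> i)"
  and inner_append_bottom_row:
  "inner (map length T @ [i]) [1] r c \<longleftrightarrow> r = Suc (length T) \<and> c = 1"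
proof -
  show inner: "inner (map length T @ [i]) [1] r c \<longleftrightarrow> r = Suc (length T) \<and> c = 1"
    unfolding inner_def by auto
  have "in_shape (map length T @ [i]) r c \<longleftrightarrow>
      (r \<le> length T \<and> box T r c) \<or> (r = Suc (length T) \<and> 1 \<le> c \<and> c \<le> i)"
    unfolding in_shape_def box_def by (cases "r \<le> length T"; cases r) (auto simp: nth_append)
  then show "filled (map length T @ [i]) [1] r c \<longleftrightarrow>
      (r \<le> length T \<and> box T r c) \<or> (r = Suc (length T) \<and> 2 \<le> c \<and> c \<le> i)"
    unfolding filled_def inner by auto
qed

context
  fixes T :: "nat list list" and H :: "nat list" and i :: nat
  assumes T: "tableau T" and i: "1 \<le> i" and H: "length H = i - 1" "sorted H" "\<forall>h\<in>set H. 0 < h"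
    and fits: "\<And>c. 1 \<le> c \<Longrightarrow> c < i \<Longrightarrow> fits_below T c (H ! (i - 1 - c))"
begin

lemma append_bottom_row_triple:
  assumes rs: "r < s" "1 \<le> c" and s: "filled (map length T @ [i]) [1] s (c + 1)"
    and r: "inner (map length T @ [i]) [1] r c \<or> filled (map length T @ [i]) [1] r c
      \<and> ent (T @ [0 # rev H]) s (c + 1) \<le> ent (T @ [0 # rev H]) r c"
  shows "filled (map length T @ [i]) [1] r (c + 1)
    \<and> ent (T @ [0 # rev H]) s (c + 1) < ent (T @ [0 # rev H]) r (c + 1)"
proof -
  let ?n = "length T" and ?V = "T @ [0 # rev H]"
  note ent_V = ent_append_bottom_row[OF H(1), of T]
  note filled = filled_append_bottom_row[of T i]
  note pos_iff = tableau_ent_pos_iff[OF T]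
  have "s \<le> Suc ?n" using s unfolding filled box_def by auto
  then have r_le: "r \<le> ?n" using rs by simp
  then have "filled (map length T @ [i]) [1] r c" and le: "ent ?V s (c + 1) \<le> ent ?V r c"
    using r inner_append_bottom_row by auto
  then have r_pos: "0 < ent T r c" using r_le unfolding filled pos_iff by auto
  have less: "ent ?V s (Suc c) < ent ?V r (Suc c)"
  proof (cases "s \<le> ?n")
    case True
    then have "0 < ent T s (Suc c)" using s unfolding filled pos_iff by auto
    then show ?thesis using tableau_triple[OF T rs] le ent_V True r_le by simp
  next
    case False
    then have s_eq: "s = Suc ?n" "Suc c \<le> i" using s \<open>s \<le> Suc ?n\<close> unfolding filled by auto
    have "H ! (i - 1 - c) \<le> ent T r c" using le ent_V s_eq r_le rs by simp
    then have "H ! (i - 1 - c) < ent T r (Suc c)"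
      using fits[of c] rs s_eq r_pos unfolding fits_below_def by auto
    then show ?thesis using ent_V s_eq r_le rs by simp
  qed
  then have "0 < ent T r (Suc c)" using ent_V r_le by simp
  then show ?thesis using less r_le unfolding filled pos_iff by simp
qed

lemma ssrct_append_bottom_row: "ssrct (map length T @ [i]) [1] (T @ [0 # rev H])"
proof -
  let ?n = "length T" and ?\<gamma> = "map length T @ [i]" and ?V = "T @ [0 # rev H]"
  note ent_V = ent_append_bottom_row[OF H(1), of T]
  note filled = filled_append_bottom_row[of T i]
  note pos_iff = tableau_ent_pos_iff[OF T]
  have H_pos: "0 < H ! (i - c)" if "2 \<le> c" "c \<le> i" for c using that H by simp
  show ?thesis
    unfolding ssrct_def
  proof (intro conjI allI impI)
    show "is_comp ?\<gamma>" using T i unfolding tableau_def is_comp_def by auto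
    show "is_comp [1]" by (simp add: is_comp_def)
    show "length [1] \<le> length ?\<gamma>" by simp
    show "map length ?V = ?\<gamma>" using H(1) i by simp
  next
    fix k assume "k < length [1::nat]"
    then show "[1::nat] ! k \<le> ?\<gamma> ! (length ?\<gamma> - length [1::nat] + k)" using i by (simp add: nth_append)
  next
    fix r c assume "filled ?\<gamma> [1] r c"
    then show "0 < ent ?V r c" unfolding filled ent_V using pos_iff H_pos by auto
  next
    fix r c assume rc: "filled ?\<gamma> [1] r c \<and> filled ?\<gamma> [1] r (c + 1)"
    show "ent ?V r (c + 1) \<le> ent ?V r c"
    proof (cases "r \<le> ?n")
      case True
      then have "1 \<le> c" using rc unfolding filled box_def by auto
      then show ?thesis using True ent_V tableau_row_decreasing[OF T] by simp
    next
      case False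
      then have r: "r = Suc ?n" "2 \<le> c" "Suc c \<le> i" using rc unfolding filled by auto
      then have "H ! (i - Suc c) \<le> H ! (i - c)" using H by (simp add: sorted_nth_mono)
      then show ?thesis using ent_V r by simp
    qed
  next
    fix r s assume "r < s \<and> filled ?\<gamma> [1] r 1 \<and> filled ?\<gamma> [1] s 1"
    then show "ent ?V r 1 < ent ?V s 1"
      unfolding filled using ent_V tableau_first_col_increasing[OF T] pos_iff by (auto simp: box_def)
  qed (use append_bottom_row_triple in blast)
qed

end

lemma addable_in_col_imp_part:
  assumes "2 \<le> i" "addable_in_col (sorted_partition \<alpha>) i"
  shows "i - 1 \<in> set \<alpha>"
proof -
  obtain k where k: "1 \<le> k" "partval (sorted_partition \<alpha>) k = i - 1"
    using assms(2) unfolding addable_in_col_def by blast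
  then have "k \<le> length (sorted_partition \<alpha>)" "sorted_partition \<alpha> ! (k - 1) = i - 1"
    using assms(1) unfolding partval_def by (auto split: if_splits)
  then have "i - 1 \<in> set (sorted_partition \<alpha>)" using k(1) by (metis Suc_le_eq Suc_pred' nth_mem le_trans less_one not_le)
  then show ?thesis by (simp add: sorted_partition_def)
qed

theorem theorem6p24:
  fixes i :: nat and \<alpha> :: "nat list" and T :: "nat list list"
  assumes "1 \<le> i"
    and "ssrct \<alpha> [] T"
    and "addable_in_col (sorted_partition \<alpha>) i"
  shows "ssrct (uop i \<alpha>) [1] (mu i T)"
proof -
  have lengths: "map length T = \<alpha>" and T: "tableau T" using ssrct_Nil_imp_tableau[OF assms(2)] by auto
  have ready: "i - 1 = 0 \<or> i - 1 \<in> set (map length T)"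
    using addable_in_col_imp_part[OF _ assms(3)] lengths by (cases "2 \<le> i") auto
  obtain T' H where mu_aux: "mu_aux (i - 1) T = (T', H)" by fastforce
  have T': "tableau T'" "map length T' = vop (i - 1) \<alpha>"
    using tableau_mu_aux[OF T ready] mu_aux lengths by auto
  have H: "length H = i - 1" "sorted H" "\<forall>h\<in>set H. 0 < h"
    using length_mu_aux_exits[of "i - 1" T] mu_aux_exits_sorted_pos[OF T ready] mu_aux by auto
  have "fits_below T' c (H ! (i - 1 - c))" if "1 \<le> c" "c < i" for c
    using mu_aux_exits_fit_below[OF T ready, of c] that mu_aux by simp
  then have "ssrct (map length T' @ [i]) [1] (T' @ [0 # rev H])"
    using ssrct_append_bottom_row[OF T'(1) assms(1) H] by blast
  moreover have "mu i T = T' @ [0 # rev H]" using mu_aux H(2) by (simp add: mu_def sorted_sort_id)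
  moreover have "uop i \<alpha> = map length T' @ [i]" using T'(2) by (simp add: uop_def aop_def)
  ultimately show ?thesis by simp
qed

end
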